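(* Let $k>4$ be even and let $f:\mathbb{Z}_k\to\mathbb{Z}_k$. If there is some $y\in\mathbb{Z}_k$ such that the equation $f(x)=y$ has more than $k/2$ solutions $x\in\mathbb{Z}_k$, then $f$ is not semi-planar.
   Context: $\mathbb{Z}_k$ denotes the additive cyclic group of integers modulo $k$. A function $f:\mathbb{Z}_k\to\mathbb{Z}_k$ is semi-planar if for every non-zero $a\in\mathbb{Z}_k$ and every $y\in\mathbb{Z}_k$, the equation $f(x+a)-f(x)=y$ has either $0$ or $2$ solutions $x\in\mathbb{Z}_k$. *)

theory Defs
  imports Main
begin

text \<open>Z_k is modelled as the carrier {0..<k} of naturals with arithmetic mod k.
  A function f : Z_k -> Z_k is a function nat => nat taking values in {0..<k} on {0..<k}.\<close>

definition zk_fun :: "nat \<Rightarrow> (nat \<Rightarrow> nat) \<Rightarrow> bool" where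
  "zk_fun k f \<longleftrightarrow> (\<forall>x\<in>{0..<k}. f x \<in> {0..<k})"

definition semi_planar :: "nat \<Rightarrow> (nat \<Rightarrow> nat) \<Rightarrow> bool" where
  "semi_planar k f \<longleftrightarrow>
     (\<forall>a\<in>{1..<k}. \<forall>y\<in>{0..<k}.
        card {x\<in>{0..<k}. (f ((x + a) mod k) + k - f x) mod k = y} \<in> {0, 2})"

end

theory Submission
  imports Defs
begin

text \<open>Let \<open>S\<close> be a fibre of \<open>f\<close> with \<open>s > k/2\<close> elements. Each of the \<open>s(s - 1)\<close> ordered pairs of
  distinct points of \<open>S\<close> differs by a unique non-zero shift \<open>a\<close>, and a pair \<open>(x, x + a)\<close> inside \<open>S\<close> solves
  \<open>f(x + a) - f(x) = 0\<close>. Semi-planarity allows at most two solutions per shift, so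
  \<open>s(s - 1) \<le> 2(k - 1)\<close>; with \<open>k = 2m\<close> and \<open>s \<ge> m + 1\<close> this forces \<open>(m - 1)(m - 2) \<le> 0\<close>, i.e. \<open>k \<le> 4\<close>.\<close>

lemma add_mod_eq_if_less:
  fixes k x a :: nat
  assumes "x < k" and "a < k"
  shows "(x + a) mod k = (if x + a < k then x + a else x + a - k)"
  using assms by (simp add: le_mod_geq)

lemma bij_betw_shift_mod:
  fixes k x :: nat
  assumes "x < k"
  shows "bij_betw (\<lambda>a. (x + a) mod k) {1..<k} ({0..<k} - {x})"
proof (rule bij_betw_imageI)
  show "inj_on (\<lambda>a. (x + a) mod k) {1..<k}"
  proof (rule inj_onI)
    fix a b assume "a \<in> {1..<k}" "b \<in> {1..<k}" "(x + a) mod k = (x + b) mod k"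
    then show "a = b"
      using assms by (simp add: add_mod_eq_if_less split: if_splits)
  qed
  show "(\<lambda>a. (x + a) mod k) ` {1..<k} = {0..<k} - {x}"
  proof
    show "(\<lambda>a. (x + a) mod k) ` {1..<k} \<subseteq> {0..<k} - {x}"
      using assms by (auto simp: add_mod_eq_if_less split: if_splits)
  next
    show "{0..<k} - {x} \<subseteq> (\<lambda>a. (x + a) mod k) ` {1..<k}"
    proof
      fix z assume z: "z \<in> {0..<k} - {x}"
      define a where "a = (z + k - x) mod k"
      have "(x + a) mod k = z"
        using assms z by (simp add: a_def mod_add_right_eq)
      moreover have "a \<in> {1..<k}"
        using assms z \<open>(x + a) mod k = z\<close> by (cases "a = 0") (auto simp: a_def)
      ultimately show "z \<in> (\<lambda>a. (x + a) mod k) ` {1..<k}" by force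
    qed
  qed
qed

lemma card_shifts_into:
  fixes k x :: nat
  assumes "S \<subseteq> {0..<k}" and "x \<in> S"
  shows "card {a\<in>{1..<k}. (x + a) mod k \<in> S} = card S - 1"
proof -
  have bij: "bij_betw (\<lambda>a. (x + a) mod k) {1..<k} ({0..<k} - {x})"
    using assms by (intro bij_betw_shift_mod) auto
  let ?shift = "\<lambda>a. (x + a) mod k" and ?A = "{a\<in>{1..<k}. (x + a) mod k \<in> S}"
  have "?shift ` ?A = ?shift ` {1..<k} \<inter> S"
    by blast
  also have "\<dots> = S - {x}"
    using bij assms(1) unfolding bij_betw_def by blast
  finally have image: "?shift ` ?A = S - {x}" .
  have "inj_on ?shift ?A"
    using bij_betw_imp_inj_on[OF bij] by (rule inj_on_subset) auto
  then have "card ?A = card (S - {x})"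
    using card_image image by fastforce
  also have "\<dots> = card S - 1"
    using assms by simp
  finally show ?thesis .
qed

lemma sum_card_shift_pairs:
  fixes k :: nat
  assumes "S \<subseteq> {0..<k}"
  shows "(\<Sum>a\<in>{1..<k}. card {x\<in>S. (x + a) mod k \<in> S}) = card S * (card S - 1)"
proof -
  have "finite S"
    using assms finite_subset by blast
  then have "(\<Sum>a\<in>{1..<k}. card {x\<in>S. (x + a) mod k \<in> S})
      = (\<Sum>a\<in>{1..<k}. \<Sum>x\<in>S. if (x + a) mod k \<in> S then 1 else 0)"
    by (simp add: sum.If_cases Int_def)
  also have "\<dots> = (\<Sum>x\<in>S. \<Sum>a\<in>{1..<k}. if (x + a) mod k \<in> S then 1 else 0)"
    by (rule sum.swap)
  also have "\<dots> = (\<Sum>x\<in>S. card S - 1)"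
    using card_shifts_into[OF assms] by (simp add: sum.If_cases Int_def)
  finally show ?thesis
    by simp
qed

lemma semi_planar_card_fibre_shift_le_2:
  fixes k :: nat and f :: "nat \<Rightarrow> nat"
  assumes "semi_planar k f" and "a \<in> {1..<k}"
  shows "card {x\<in>{0..<k}. f x = y \<and> f ((x + a) mod k) = y} \<le> 2"
proof -
  let ?Z = "{x\<in>{0..<k}. (f ((x + a) mod k) + k - f x) mod k = 0}"
  have "\<forall>z\<in>{0..<k}. card {x\<in>{0..<k}. (f ((x + a) mod k) + k - f x) mod k = z} \<in> {0, 2}"
    using assms unfolding semi_planar_def by blast
  moreover have "0 \<in> {0..<k}"
    using assms(2) by simp
  ultimately have "card ?Z \<in> {0, 2}"
    by (rule bspec)
  then have "card ?Z \<le> 2"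
    by (simp only: insert_iff empty_iff) arith
  moreover have "{x\<in>{0..<k}. f x = y \<and> f ((x + a) mod k) = y} \<subseteq> ?Z"
    by auto
  then have "card {x\<in>{0..<k}. f x = y \<and> f ((x + a) mod k) = y} \<le> card ?Z"
    by (intro card_mono) simp_all
  ultimately show ?thesis
    by linarith
qed

lemma semi_planar_card_fibre_bound:
  fixes k :: nat and f :: "nat \<Rightarrow> nat"
  assumes "semi_planar k f"
  shows "card {x\<in>{0..<k}. f x = y} * (card {x\<in>{0..<k}. f x = y} - 1) \<le> 2 * (k - 1)"
proof -
  let ?S = "{x\<in>{0..<k}. f x = y}"
  have "card ?S * (card ?S - 1) = (\<Sum>a\<in>{1..<k}. card {x\<in>?S. (x + a) mod k \<in> ?S})"
    by (rule sum_card_shift_pairs[symmetric]) auto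
  also have "\<dots> \<le> (\<Sum>a\<in>{1..<k}. 2)"
  proof (rule sum_mono)
    fix a assume a: "a \<in> {1..<k}"
    then have "{x\<in>?S. (x + a) mod k \<in> ?S} = {x\<in>{0..<k}. f x = y \<and> f ((x + a) mod k) = y}"
      by auto
    then show "card {x\<in>?S. (x + a) mod k \<in> ?S} \<le> 2"
      using semi_planar_card_fibre_shift_le_2[OF assms a] by simp
  qed
  finally show ?thesis
    by simp
qed

theorem lemma7:
  fixes k :: nat and f :: "nat \<Rightarrow> nat"
  assumes "even k" and "k > 4"
    and "zk_fun k f"
    and "\<exists>y\<in>{0..<k}. 2 * card {x\<in>{0..<k}. f x = y} > k"
  shows "\<not> semi_planar k f"
proof
  \<comment> \<open>The fibre bound does not need \<open>f\<close> to map into \<open>{0..<k}\<close>.\<close>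
  assume "semi_planar k f"
  obtain y where y: "2 * card {x\<in>{0..<k}. f x = y} > k"
    using assms(4) by blast
  define s where "s = card {x\<in>{0..<k}. f x = y}"
  obtain m where m: "k = 2 * m"
    using assms(1) by blast
  have "s \<ge> m + 1" and "m \<ge> 3"
    using y assms(2) by (simp_all add: s_def m)
  then have "(m + 1) * m \<le> s * (s - 1)"
    by (intro mult_mono) auto
  also have "\<dots> \<le> 2 * (2 * m - 1)"
    using semi_planar_card_fibre_bound[OF \<open>semi_planar k f\<close>, of y] by (simp add: s_def m)
  finally have "(m + 1) * m \<le> 2 * (2 * m - 1)" .
  moreover have "(m + 1) * m = m * m + m" and "3 * m \<le> m * m"
    using \<open>m \<ge> 3\<close> by simp_all
  ultimately show False
    using \<open>m \<ge> 3\<close> by linarith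
qed

end
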